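(* Let $\mathcal A$ be a well-structured abstract domain with functions $(\alpha,\gamma)$, and let monotone abstract operators $\llbracket e\rrbracket^\#:\mathcal A\to\mathcal A$ be given for each basic command $e$. Consider the induced Hoare-type proof system described in the context. (1) If $\llbracket e\rrbracket^\#$ is a sound abstraction of $\llbracket e\rrbracket$ for each basic command $e$, then the proof system is sound: $\vdash\{a\}S\{b\}$ implies $\models\{a\}S\{b\}$. (2) If $\llbracket e\rrbracket^\#$ is a complete abstraction of $\llbracket e\rrbracket$ for each basic command $e$, then the proof system is sound and relatively complete: $\vdash\{a\}S\{b\}$ iff $\models\{a\}S\{b\}$, for all $a,b\in\mathcal A$ and programs $S$.
   Context: Fix a finite set $V$ of quantum variables, each a qubit with state space $\mathcal H_q\cong\mathbb C^2$; for $W\subseteq V$, $\mathcal H_W=\bigotimes_{q\in W}\mathcal H_q$. Operators and subspaces on $\mathcal H_W$ are identified with their cylindrical extensions to $\mathcal H_V$, and a subspace is identified with its orthogonal projector; $P^\perp$ is the orthocomplement. $\mathcal D(\mathcal H_V)$ is the set of partial density operators (positive, trace $\le1$). Programs: $S::=\mathbf{skip}\mid \bar q:=|0\rangle\mid \bar q\mathrel{*{=}}U\mid \mathbf{assert}\ P[\bar q]\mid S_0;S_1\mid \mathbf{if}\ P[\bar q]\ \mathbf{then}\ S_1\ \mathbf{else}\ S_0\ \mathbf{end}\mid\mathbf{while}\ P[\bar q]\ \mathbf{do}\ S\ \mathbf{end}$, with $\bar q=q_1,\dots,q_t$ distinct variables, $U$ unitary on $\mathcal H_{\bar q}$, $P$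 a subspace of $\mathcal H_{\bar q}$; the first four forms are the basic commands. Semantics $\llbracket S\rrbracket:\mathcal D(\mathcal H_V)\to\mathcal D(\mathcal H_V)$: $\llbracket\mathbf{skip}\rrbracket(\rho)=\rho$; $\llbracket\bar q:=|0\rangle\rrbracket(\rho)=\sum_{i=0}^{2^t-1}|0\rangle_{\bar q}\langle i|\rho|i\rangle_{\bar q}\langle0|$; $\llbracket\bar q\mathrel{*{=}}U\rrbracket(\rho)=U\rho U^\dagger$; $\llbracket\mathbf{assert}\ P[\bar q]\rrbracket(\rho)=P\rho P$; $\llbracket S_0;S_1\rrbracket=\llbracket S_1\rrbracket\circ\llbracket S_0\rrbracket$; $\llbracket\mathbf{if}\ P[\bar q]\ \mathbf{then}\ S_1\ \mathbf{else}\ S_0\ \mathbf{end}\rrbracket(\rho)=\llbracket\mathbf{assert}\ P[\bar q];S_1\rrbracket(\rho)+\llbracket\mathbf{assert}\ P^\perp[\bar q];S_0\rrbracket(\rho)$; $\llbracket\mathbf{while}\ P[\bar q]\ \mathbf{do}\ S\ \mathbf{end}\rrbracket(\rho)=\sum_{i\ge0}\llbracket(\mathbf{assert}\ P[\bar q];S)^i;\mathbf{assert}\ P^\perp[\bar q]\rrbracket(\rho)$, where $T^i$ is $i$-fold sequential composition ($T^0=\mathbf{skip}$). The concrete domain is $\mathcal Q=2^{\mathcal D(\mathcal H_V)}$ ordered by inclusion, and $\llbracket S\rrbracket(R)=\{\llbracket S\rrbracket(\rho):\rho\in R\}$. A pair of monotone maps $(\alpha,\gamma)$ between posets is a Galois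 connection if $c\le\gamma(a)\iff\alpha(c)\le a$, and a Galois embedding if moreover $\alpha\circ\gamma=\mathrm{id}$. A complete lattice $(\mathcal A,\le_{\mathcal A},\vee,\wedge,\bot,\top)$ with monotone $\alpha:\mathcal Q\to\mathcal A$, $\gamma:\mathcal A\to\mathcal Q$ is a well-structured abstract domain if (a) $(\alpha,\gamma)$ is a Galois embedding, and (b) for any family $\rho_i\in\mathcal D(\mathcal H_V)$ and reals $x_i>0$ with $\sum_i x_i\rho_i\in\mathcal D(\mathcal H_V)$, $\alpha(\sum_i x_i\rho_i)=\bigvee_i\alpha(\rho_i)$, where $\alpha(\rho)=\alpha(\{\rho\})$. For $f:\mathcal Q\to\mathcal Q$, $f^\#:\mathcal A\to\mathcal A$ is a sound abstraction if $\alpha\circ f\le_{\mathcal A}f^\#\circ\alpha$ pointwise, a complete abstraction if $\alpha\circ f=f^\#\circ\alpha$. Induced Hoare system: assertions are elements of $\mathcal A$; a triple $\{a\}S\{b\}$ is valid, $\models\{a\}S\{b\}$, iff $\llbracket S\rrbracket(\gamma(a))\subseteq\gamma(b)$. Derivability $\vdash\{a\}S\{b\}$ is w.r.t. the rules: (Exp) $\{a\}e\{\llbracket e\rrbracket^\#(a)\}$ for every basic command $e$; (Seq) from $\{a\}S_0\{a'\}$ and $\{a'\}S_1\{b\}$ infer $\{a\}S_0;S_1\{b\}$; (Imp) from $a\le_{\mathcal A}a'$, $\{a'\}S\{b'\}$, $b'\le_{\mathcal A}b$ infer $\{a\}S\{b\}$; (Meas) from $\{a\}\mathbf{assert}\ P[\bar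 q];S_1\{b_1\}$ and $\{a\}\mathbf{assert}\ P^\perp[\bar q];S_0\{b_0\}$ infer $\{a\}\mathbf{if}\ P[\bar q]\ \mathbf{then}\ S_1\ \mathbf{else}\ S_0\ \mathbf{end}\{b_0\vee b_1\}$; (While) from $\{a\}\mathbf{assert}\ P[\bar q];S\{a\}$ and $\{a\}\mathbf{assert}\ P^\perp[\bar q]\{b\}$ infer $\{a\}\mathbf{while}\ P[\bar q]\ \mathbf{do}\ S\ \mathbf{end}\{b\}$. *)

theory Defs
  imports "HOL-Analysis.Analysis"
begin

text \<open>Quantum variables form a finite type 'v (the set V = UNIV). A computational basis
state of H_V is an assignment 'v => bool, so H_V = C^(2^|V|). Operators on H_V are
matrices indexed by basis states: entry A $ i $ j = <i|A|j>.\<close>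

type_synonym 'v qop = "complex ^ ('v \<Rightarrow> bool) ^ ('v \<Rightarrow> bool)"

text \<open>Local operators on H_qs for a register qs = [q1,...,qt]: matrices indexed by
bool lists of length t (bit k is the value of q_(k+1)); values at other lists are irrelevant.\<close>

type_synonym lop = "bool list \<Rightarrow> bool list \<Rightarrow> complex"

definition lists_len :: "nat \<Rightarrow> bool list set" where
  "lists_len t = {z. length z = t}"

definition cyl :: "'v list \<Rightarrow> lop \<Rightarrow> ('v::finite) qop" where
  "cyl qs A = (\<chi> i j. if (\<forall>v. v \<notin> set qs \<longrightarrow> i v = j v)
                        then A (map i qs) (map j qs) else 0)"

definition adj :: "('v::finite) qop \<Rightarrow> 'v qop" where
  "adj A = (\<chi> i j. cnj (A $ j $ i))"

definition lunitary :: "nat \<Rightarrow> lop \<Rightarrow> bool" where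
  "lunitary t U \<longleftrightarrow>
     (\<forall>x\<in>lists_len t. \<forall>y\<in>lists_len t.
        (\<Sum>z\<in>lists_len t. cnj (U z x) * U z y) = (if x = y then 1 else 0)) \<and>
     (\<forall>x\<in>lists_len t. \<forall>y\<in>lists_len t.
        (\<Sum>z\<in>lists_len t. U x z * cnj (U y z)) = (if x = y then 1 else 0))"

text \<open>A subspace of H_qs, identified with its orthogonal projector.\<close>
definition lprojector :: "nat \<Rightarrow> lop \<Rightarrow> bool" where
  "lprojector t P \<longleftrightarrow>
     (\<forall>x\<in>lists_len t. \<forall>y\<in>lists_len t. P x y = cnj (P y x)) \<and>
     (\<forall>x\<in>lists_len t. \<forall>y\<in>lists_len t. (\<Sum>z\<in>lists_len t. P x z * P z y) = P x y)"

definition lcompl :: "lop \<Rightarrow> lop" where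
  "lcompl P = (\<lambda>x y. (if x = y then 1 else 0) - P x y)"

definition psd :: "('v::finite) qop \<Rightarrow> bool" where
  "psd A \<longleftrightarrow> (\<forall>x :: complex ^ ('v \<Rightarrow> bool).
      Im (\<Sum>i\<in>UNIV. \<Sum>j\<in>UNIV. cnj (x $ i) * A $ i $ j * x $ j) = 0 \<and>
      Re (\<Sum>i\<in>UNIV. \<Sum>j\<in>UNIV. cnj (x $ i) * A $ i $ j * x $ j) \<ge> 0)"

definition Dens :: "('v::finite) qop set" where
  "Dens = {\<rho>. psd \<rho> \<and> Re (trace \<rho>) \<le> 1}"

datatype 'v prog =
    Skip
  | Init "'v list"
  | Apply "'v list" lop
  | Assert "'v list" lop
  | Seq "'v prog" "'v prog"
  | If "'v list" lop "'v prog" "'v prog"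
  | While "'v list" lop "'v prog"

fun basic :: "'v prog \<Rightarrow> bool" where
  "basic Skip = True"
| "basic (Init qs) = True"
| "basic (Apply qs U) = True"
| "basic (Assert qs P) = True"
| "basic _ = False"

fun wf_prog :: "'v prog \<Rightarrow> bool" where
  "wf_prog Skip = True"
| "wf_prog (Init qs) = (qs \<noteq> [] \<and> distinct qs)"
| "wf_prog (Apply qs U) = (qs \<noteq> [] \<and> distinct qs \<and> lunitary (length qs) U)"
| "wf_prog (Assert qs P) = (qs \<noteq> [] \<and> distinct qs \<and> lprojector (length qs) P)"
| "wf_prog (Seq S0 S1) = (wf_prog S0 \<and> wf_prog S1)"
| "wf_prog (If qs P S1 S0) =
     (qs \<noteq> [] \<and> distinct qs \<and> lprojector (length qs) P \<and> wf_prog S1 \<and> wf_prog S0)"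
| "wf_prog (While qs P S) =
     (qs \<noteq> [] \<and> distinct qs \<and> lprojector (length qs) P \<and> wf_prog S)"

definition ket0bra :: "nat \<Rightarrow> bool list \<Rightarrow> lop" where
  "ket0bra t i = (\<lambda>x y. if x = replicate t False \<and> y = i then 1 else 0)"

definition assert_op :: "'v list \<Rightarrow> lop \<Rightarrow> ('v::finite) qop \<Rightarrow> 'v qop" where
  "assert_op qs P \<rho> = cyl qs P ** \<rho> ** cyl qs P"

fun sem :: "'v prog \<Rightarrow> ('v::finite) qop \<Rightarrow> 'v qop" where
  "sem Skip \<rho> = \<rho>"
| "sem (Init qs) \<rho> =
     (\<Sum>i\<in>lists_len (length qs).
        cyl qs (ket0bra (length qs) i) ** \<rho> ** adj (cyl qs (ket0bra (length qs) i)))"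
| "sem (Apply qs U) \<rho> = cyl qs U ** \<rho> ** adj (cyl qs U)"
| "sem (Assert qs P) \<rho> = assert_op qs P \<rho>"
| "sem (Seq S0 S1) \<rho> = sem S1 (sem S0 \<rho>)"
| "sem (If qs P S1 S0) \<rho> = sem S1 (assert_op qs P \<rho>) + sem S0 (assert_op qs (lcompl P) \<rho>)"
| "sem (While qs P S) \<rho> =
     (\<Sum>k. assert_op qs (lcompl P) (((\<lambda>\<sigma>. sem S (assert_op qs P \<sigma>)) ^^ k) \<rho>))"

text \<open>Concrete domain Q = subsets of Dens, ordered by inclusion. alpha is only
meaningful on subsets of Dens; gamma must land in Q.\<close>

definition well_structured ::
  "(('v::finite) qop set \<Rightarrow> 'a::complete_lattice) \<Rightarrow> ('a \<Rightarrow> 'v qop set) \<Rightarrow> bool" where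
  "well_structured \<alpha> \<gamma> \<longleftrightarrow>
     (\<forall>a. \<gamma> a \<subseteq> Dens) \<and>
     (\<forall>c c'. c \<subseteq> c' \<and> c' \<subseteq> Dens \<longrightarrow> \<alpha> c \<le> \<alpha> c') \<and>
     mono \<gamma> \<and>
     (\<forall>c a. c \<subseteq> Dens \<longrightarrow> (c \<subseteq> \<gamma> a \<longleftrightarrow> \<alpha> c \<le> a)) \<and>
     (\<forall>a. \<alpha> (\<gamma> a) = a) \<and>
     (\<forall>(I::nat set) (\<rho>::nat \<Rightarrow> 'v qop) (x::nat \<Rightarrow> real) \<sigma>.
        (\<forall>i\<in>I. \<rho> i \<in> Dens \<and> x i > 0) \<and>
        ((\<lambda>i. x i *\<^sub>R \<rho> i) has_sum \<sigma>) I \<and> \<sigma> \<in> Dens \<longrightarrow>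
        \<alpha> {\<sigma>} = (SUP i\<in>I. \<alpha> {\<rho> i}))"

definition sound_abs ::
  "(('v::finite) qop set \<Rightarrow> 'a::complete_lattice) \<Rightarrow> ('v qop \<Rightarrow> 'v qop) \<Rightarrow> ('a \<Rightarrow> 'a) \<Rightarrow> bool" where
  "sound_abs \<alpha> f fa \<longleftrightarrow> (\<forall>c. c \<subseteq> Dens \<longrightarrow> \<alpha> (f ` c) \<le> fa (\<alpha> c))"

definition complete_abs ::
  "(('v::finite) qop set \<Rightarrow> 'a::complete_lattice) \<Rightarrow> ('v qop \<Rightarrow> 'v qop) \<Rightarrow> ('a \<Rightarrow> 'a) \<Rightarrow> bool" where
  "complete_abs \<alpha> f fa \<longleftrightarrow> (\<forall>c. c \<subseteq> Dens \<longrightarrow> \<alpha> (f ` c) = fa (\<alpha> c))"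

definition valid :: "('a \<Rightarrow> ('v::finite) qop set) \<Rightarrow> 'a \<Rightarrow> 'v prog \<Rightarrow> 'a \<Rightarrow> bool" where
  "valid \<gamma> a S b \<longleftrightarrow> sem S ` \<gamma> a \<subseteq> \<gamma> b"

inductive hoare :: "('v prog \<Rightarrow> 'a::complete_lattice \<Rightarrow> 'a) \<Rightarrow> 'a \<Rightarrow> 'v prog \<Rightarrow> 'a \<Rightarrow> bool"
  for absop :: "'v prog \<Rightarrow> 'a \<Rightarrow> 'a" where
  Exp: "basic e \<Longrightarrow> hoare absop a e (absop e a)"
| SeqR: "hoare absop a S0 a' \<Longrightarrow> hoare absop a' S1 b \<Longrightarrow> hoare absop a (Seq S0 S1) b"
| Imp: "a \<le> a' \<Longrightarrow> hoare absop a' S b' \<Longrightarrow> b' \<le> b \<Longrightarrow> hoare absop a S b"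
| Meas: "hoare absop a (Seq (Assert qs P) S1) b1 \<Longrightarrow>
         hoare absop a (Seq (Assert qs (lcompl P)) S0) b0 \<Longrightarrow>
         hoare absop a (If qs P S1 S0) (sup b0 b1)"
| WhileR: "hoare absop a (Seq (Assert qs P) S) a \<Longrightarrow>
           hoare absop a (Assert qs (lcompl P)) b \<Longrightarrow>
           hoare absop a (While qs P S) b"

end

theory Submission
  imports Defs
begin

text \<open>
  The abstraction of a set of states is the join of the abstractions of its elements, and by
  condition (b) the abstraction of a sum of states is the join of the abstractions of the
  summands. The semantics of a conditional is the sum of its two branches, and the semantics
  of a loop is the series of its exits, i.e. of the programs (assert P; S)^k; assert P\<bottom>;
  this series converges absolutely because every program maps partial density operators to
  partial density operators without increasing the trace. Hence the abstraction of the image of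
  a conditional or loop is the join of the abstractions of the images of its parts, which gives
  soundness of (Meas) and (While). For relative completeness, completeness of the basic
  abstract operators propagates along the program structure, so the strongest postcondition
  \<alpha>(\<lbrakk>S\<rbrakk>(\<gamma> a)) is derivable for every program; for a loop, the abstraction of all states
  reachable at the loop head is an inductive invariant.
\<close>

section \<open>Positive semidefinite operators\<close>

lemma mult_if_zero:
  "x * (if b then y else 0) = (if b then x * y else (0::'a::mult_zero))"
  "(if b then y else 0) * x = (if b then y * x else (0::'a::mult_zero))"
  by simp_all

definition qform :: "('v::finite) qop \<Rightarrow> complex ^ ('v \<Rightarrow> bool) \<Rightarrow> complex" where
  "qform A x = (\<Sum>i\<in>UNIV. cnj (x $ i) * (A *v x) $ i)"

lemma psd_iff_qform: "psd A \<longleftrightarrow> (\<forall>x. Im (qform A x) = 0 \<and> Re (qform A x) \<ge> 0)"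
proof -
  have "qform A x = (\<Sum>i\<in>UNIV. \<Sum>j\<in>UNIV. cnj (x $ i) * A $ i $ j * x $ j)" for x
    by (simp add: qform_def matrix_vector_mult_def sum_distrib_left mult.assoc)
  then show ?thesis
    by (simp add: psd_def)
qed

lemma sum_cnj_mult_adj:
  "(\<Sum>i\<in>UNIV. cnj (x $ i) * (M *v z) $ i) = (\<Sum>k\<in>UNIV. cnj ((adj M *v x) $ k) * z $ k)"
proof -
  have "(\<Sum>i\<in>UNIV. cnj (x $ i) * (M *v z) $ i) = (\<Sum>i\<in>UNIV. \<Sum>k\<in>UNIV. cnj (x $ i) * M $ i $ k * z $ k)"
    by (simp add: matrix_vector_mult_def sum_distrib_left mult.assoc)
  also have "\<dots> = (\<Sum>k\<in>UNIV. \<Sum>i\<in>UNIV. cnj (x $ i) * M $ i $ k * z $ k)"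
    by (rule sum.swap)
  also have "\<dots> = (\<Sum>k\<in>UNIV. cnj ((adj M *v x) $ k) * z $ k)"
    by (simp add: matrix_vector_mult_def adj_def sum_distrib_left sum_distrib_right mult.commute mult.left_commute)
  finally show ?thesis .
qed

lemma qform_conj: "qform (M ** A ** adj M) x = qform A (adj M *v x)"
  by (simp add: qform_def matrix_vector_mul_assoc[symmetric] sum_cnj_mult_adj)

lemma psd_conj: "psd A \<Longrightarrow> psd (M ** A ** adj M)"
  by (simp add: psd_iff_qform qform_conj)

lemma qform_add: "qform (A + B) x = qform A x + qform B x"
  by (simp add: qform_def matrix_vector_mult_def sum.distrib ring_distribs)

lemma psd_add: "psd A \<Longrightarrow> psd B \<Longrightarrow> psd (A + B)"
  by (simp add: psd_iff_qform qform_add)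

lemma psd_sum: "(\<And>i. i \<in> I \<Longrightarrow> psd (f i)) \<Longrightarrow> psd (\<Sum>i\<in>I. f i)"
proof (induction I rule: infinite_finite_induct)
  case (infinite I)
  then show ?case by (simp add: psd_iff_qform qform_def matrix_vector_mult_def)
next
  case empty
  then show ?case by (simp add: psd_iff_qform qform_def matrix_vector_mult_def)
next
  case (insert i I)
  then show ?case by (simp add: psd_add)
qed

lemma qform_axis: "qform A (axis i 1) = A $ i $ i"
  by (simp add: qform_def matrix_vector_mult_def axis_def mult_if_zero if_distrib[of cnj] cong: if_cong)

lemma qform_axis_pair:
  assumes "i \<noteq> j"
  shows "qform A (axis i 1 + axis j w) = A$i$i + A$i$j * w + cnj w * (A$j$i + A$j$j * w)"
  using assms
  by (simp add: qform_def matrix_vector_mult_def axis_def algebra_simps sum.distrib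
      mult_if_zero if_distrib[of cnj] cong: if_cong)

lemma psd_diag: "psd A \<Longrightarrow> Im (A $ i $ i) = 0 \<and> Re (A $ i $ i) \<ge> 0"
  by (metis psd_iff_qform qform_axis)

lemma psd_trace: "psd A \<Longrightarrow> Im (trace A) = 0 \<and> Re (trace A) \<ge> 0"
  by (simp add: trace_def Re_sum Im_sum psd_diag sum_nonneg)

lemma psd_offdiag_le:
  assumes "psd A"
  shows "cmod (A $ i $ j) \<le> Re (A $ i $ i) + Re (A $ j $ j)"
proof (cases "i = j")
  case True
  then show ?thesis
    using psd_diag[OF assms, of j] by (simp add: cmod_eq_Re)
next
  case False
  \<comment> \<open>test the quadratic form on the vectors e_i + w e_j for w = \<plusminus>1, \<plusminus>\<i>\<close>
  have q: "Im (qform A (axis i 1 + axis j w)) = 0 \<and> Re (qform A (axis i 1 + axis j w)) \<ge> 0" for w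
    using assms psd_iff_qform by blast
  have "Im (A$i$j) + Im (A$j$i) = 0" "Re (A$i$j) - Re (A$j$i) = 0"
    "Re (A$i$i) + Re (A$j$j) + Re (A$i$j) + Re (A$j$i) \<ge> 0"
    "Re (A$i$i) + Re (A$j$j) - Re (A$i$j) - Re (A$j$i) \<ge> 0"
    "Re (A$i$i) + Re (A$j$j) - Im (A$i$j) + Im (A$j$i) \<ge> 0"
    "Re (A$i$i) + Re (A$j$j) + Im (A$i$j) - Im (A$j$i) \<ge> 0"
    using q[of 1] q[of "-1"] q[of "\<i>"] q[of "-\<i>"] psd_diag[OF assms, of i] psd_diag[OF assms, of j]
    by (simp_all add: qform_axis_pair[OF False] algebra_simps)
  moreover have "cmod (A$i$j) \<le> \<bar>Re (A$i$j)\<bar> + \<bar>Im (A$i$j)\<bar>"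
    by (rule cmod_le)
  ultimately show ?thesis by linarith
qed

lemma norm_vec_le_sum: "norm (x :: 'a::real_normed_vector ^ 'n) \<le> (\<Sum>i\<in>UNIV. norm (x $ i))"
  unfolding norm_vec_def by (rule L2_set_le_sum) simp

lemma norm_psd_le_trace:
  fixes A :: "('v::finite) qop"
  assumes "psd A"
  shows "norm A \<le> 2 * real CARD('v \<Rightarrow> bool) * Re (trace A)"
proof -
  have "norm A \<le> (\<Sum>i\<in>UNIV. norm (A $ i))"
    by (rule norm_vec_le_sum)
  also have "\<dots> \<le> (\<Sum>i\<in>UNIV. \<Sum>j\<in>UNIV. cmod (A $ i $ j))"
    by (intro sum_mono norm_vec_le_sum)
  also have "\<dots> \<le> (\<Sum>i\<in>UNIV. \<Sum>j\<in>UNIV. Re (A $ i $ i) + Re (A $ j $ j))"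
    by (intro sum_mono psd_offdiag_le assms)
  also have "\<dots> = 2 * real CARD('v \<Rightarrow> bool) * Re (trace A)"
    by (simp add: sum.distrib trace_def Re_sum sum_distrib_left[symmetric] algebra_simps)
  finally show ?thesis .
qed

lemma psd_sums:
  fixes T :: "nat \<Rightarrow> ('v::finite) qop"
  assumes sums: "T sums \<sigma>" and psd: "\<And>k. psd (T k)"
  shows "psd \<sigma>" and "(\<lambda>k. Re (trace (T k))) sums Re (trace \<sigma>)"
proof -
  have entry: "(\<lambda>k. T k $ i $ j) sums (\<sigma> $ i $ j)" for i j
    using bounded_linear.sums[OF bounded_linear_compose[OF bounded_linear_vec_nth bounded_linear_vec_nth] sums] .
  have qform: "(\<lambda>k. qform (T k) x) sums qform \<sigma> x" for x
    unfolding qform_def matrix_vector_mult_def vec_lambda_beta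
    by (intro sums_sum sums_mult sums_mult2 entry)
  show "psd \<sigma>"
    unfolding psd_iff_qform
  proof
    fix x
    have "(\<lambda>k. Im (qform (T k) x)) sums Im (qform \<sigma> x)"
      by (rule sums_Im[OF qform])
    moreover have "(\<lambda>k. Im (qform (T k) x)) = (\<lambda>k. 0)"
      using psd by (simp add: psd_iff_qform)
    ultimately have "Im (qform \<sigma> x) = 0"
      by (metis sums_0 sums_unique)
    moreover have "0 \<le> Re (qform \<sigma> x)"
      by (rule sums_le[OF _ sums_zero sums_Re[OF qform]]) (use psd psd_iff_qform in blast)
    ultimately show "Im (qform \<sigma> x) = 0 \<and> 0 \<le> Re (qform \<sigma> x)"
      by simp
  qed
  have "(\<lambda>k. trace (T k)) sums trace \<sigma>"
    unfolding trace_def by (intro sums_sum entry)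
  then show "(\<lambda>k. Re (trace (T k))) sums Re (trace \<sigma>)"
    by (rule sums_Re)
qed

lemma psd_series_has_sum:
  fixes T :: "nat \<Rightarrow> ('v::finite) qop"
  assumes psd: "\<And>k. psd (T k)" and bound: "\<And>n. (\<Sum>k<n. Re (trace (T k))) \<le> B"
  shows "(T has_sum (\<Sum>k. T k)) UNIV" and "psd (\<Sum>k. T k)" and "Re (trace (\<Sum>k. T k)) \<le> B"
proof -
  have trace_summable: "summable (\<lambda>k. Re (trace (T k)))"
  proof (rule bounded_imp_summable)
    show "0 \<le> Re (trace (T k))" for k
      using psd_trace[OF psd] by simp
    show "(\<Sum>k\<le>n. Re (trace (T k))) \<le> B" for n
      using bound[of "Suc n"] by (simp add: lessThan_Suc_atMost)
  qed
  have norm_summable: "summable (\<lambda>k. norm (T k))"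
    by (rule summable_comparison_test[OF _ summable_mult[OF trace_summable, of "2 * real CARD('v \<Rightarrow> bool)"]])
      (use norm_psd_le_trace[OF psd] in simp)
  then have sums: "T sums (\<Sum>k. T k)"
    using summable_norm_cancel summable_sums by blast
  show "(T has_sum (\<Sum>k. T k)) UNIV"
    by (rule norm_summable_imp_has_sum[OF norm_summable sums])
  show "psd (\<Sum>k. T k)"
    by (rule psd_sums(1)[OF sums psd])
  show "Re (trace (\<Sum>k. T k)) \<le> B"
    using psd_sums(2)[OF sums psd] bound by (metis sums_unique sums_summable suminf_le_const)
qed

section \<open>Cylindrical extensions of local operators\<close>

definition agree :: "'v list \<Rightarrow> ('v \<Rightarrow> bool) \<Rightarrow> ('v \<Rightarrow> bool) \<Rightarrow> bool" where
  "agree qs i j \<longleftrightarrow> (\<forall>v. v \<notin> set qs \<longrightarrow> i v = j v)"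

lemma cyl_nth:
  "(cyl qs A :: ('v::finite) qop) $ i $ j = (if agree qs i j then A (map i qs) (map j qs) else 0)"
  by (simp add: cyl_def agree_def)

lemma agree_sym: "agree qs i j \<longleftrightarrow> agree qs j i"
  by (auto simp: agree_def)

lemma agree_trans: "agree qs i j \<Longrightarrow> agree qs j k \<Longrightarrow> agree qs i k"
  by (auto simp: agree_def)

lemma agree_map_eq_iff: "agree qs i j \<and> map i qs = map j qs \<longleftrightarrow> i = j"
  by (auto simp: agree_def fun_eq_iff)

lemma finite_lists_len: "finite (lists_len t)"
  using finite_lists_length_eq[of "UNIV :: bool set" t] by (simp add: lists_len_def)

lemma bij_betw_map_agree:
  assumes "distinct qs"
  shows "bij_betw (\<lambda>j. map j qs) {j. agree qs i j} (lists_len (length qs))"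
  unfolding bij_betw_def
proof
  show "inj_on (\<lambda>j. map j qs) {j. agree qs i j}"
    by (auto simp: inj_on_def agree_def fun_eq_iff)
  show "(\<lambda>j. map j qs) ` {j. agree qs i j} = lists_len (length qs)"
  proof
    show "(\<lambda>j. map j qs) ` {j. agree qs i j} \<subseteq> lists_len (length qs)"
      by (auto simp: lists_len_def)
  next
    show "lists_len (length qs) \<subseteq> (\<lambda>j. map j qs) ` {j. agree qs i j}"
    proof
      fix z assume z: "z \<in> lists_len (length qs)"
      have len: "length qs = length z"
        using z by (simp add: lists_len_def)
      define j where "j v = (case map_of (zip qs z) v of None \<Rightarrow> i v | Some b \<Rightarrow> b)" for v
      have "map j qs = z"
        using len assms by (intro nth_equalityI) (auto simp: j_def map_of_zip_nth)
      moreover have "agree qs i j"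
        by (auto simp: agree_def j_def dest: map_of_SomeD set_zip_leftD split: option.split)
      ultimately show "z \<in> (\<lambda>j. map j qs) ` {j. agree qs i j}"
        by blast
    qed
  qed
qed

definition lmult :: "nat \<Rightarrow> lop \<Rightarrow> lop \<Rightarrow> lop" where
  "lmult t A B = (\<lambda>x y. \<Sum>z\<in>lists_len t. A x z * B z y)"

lemma cyl_mult:
  assumes "distinct qs"
  shows "cyl qs A ** cyl qs B = (cyl qs (lmult (length qs) A B) :: ('v::finite) qop)"
proof -
  have "(cyl qs A ** cyl qs B :: 'v qop) $ i $ k = cyl qs (lmult (length qs) A B) $ i $ k" for i k
  proof (cases "agree qs i k")
    case True
    have "(cyl qs A ** cyl qs B :: 'v qop) $ i $ k =
        (\<Sum>j\<in>UNIV. if agree qs i j then A (map i qs) (map j qs) * B (map j qs) (map k qs) else 0)"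
      unfolding matrix_matrix_mult_def cyl_nth vec_lambda_beta
    proof (intro sum.cong refl)
      fix j
      show "(if agree qs i j then A (map i qs) (map j qs) else 0) *
          (if agree qs j k then B (map j qs) (map k qs) else 0) =
          (if agree qs i j then A (map i qs) (map j qs) * B (map j qs) (map k qs) else 0)"
        using True agree_trans[of qs i j k] agree_trans[of qs j i k] agree_sym[of qs i j] by auto
    qed
    also have "\<dots> = (\<Sum>j\<in>{j. agree qs i j}. A (map i qs) (map j qs) * B (map j qs) (map k qs))"
      by (simp add: sum.If_cases)
    also have "\<dots> = (\<Sum>z\<in>lists_len (length qs). A (map i qs) z * B z (map k qs))"
      by (rule sum.reindex_bij_betw[OF bij_betw_map_agree[OF assms]])
    finally show ?thesis
      using True by (simp add: cyl_nth lmult_def)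
  next
    case False
    have "(cyl qs A ** cyl qs B :: 'v qop) $ i $ k = 0"
      unfolding matrix_matrix_mult_def cyl_nth vec_lambda_beta
      by (rule sum.neutral) (use False agree_trans[of qs i _ k] in auto)
    then show ?thesis
      using False by (simp add: cyl_nth)
  qed
  then show ?thesis
    by (simp add: vec_eq_iff)
qed

lemma adj_cyl: "adj (cyl qs A :: ('v::finite) qop) = cyl qs (\<lambda>x y. cnj (A y x))"
  by (auto simp: adj_def cyl_nth vec_eq_iff agree_sym)

lemma cyl_cong:
  "(\<And>x y. x \<in> lists_len (length qs) \<Longrightarrow> y \<in> lists_len (length qs) \<Longrightarrow> A x y = B x y) \<Longrightarrow>
    (cyl qs A :: ('v::finite) qop) = cyl qs B"
  by (simp add: cyl_nth lists_len_def vec_eq_iff)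

lemma cyl_id: "(cyl qs (\<lambda>x y. if x = y then 1 else 0) :: ('v::finite) qop) = mat 1"
  using agree_map_eq_iff[of qs] by (auto simp: cyl_nth mat_def vec_eq_iff)

lemma cyl_add: "(cyl qs (\<lambda>x y. A x y + B x y) :: ('v::finite) qop) = cyl qs A + cyl qs B"
  by (simp add: cyl_nth vec_eq_iff)

lemma cyl_sum: "(cyl qs (\<lambda>x y. \<Sum>i\<in>I. A i x y) :: ('v::finite) qop) = (\<Sum>i\<in>I. cyl qs (A i))"
  by (cases "finite I") (simp_all add: cyl_nth vec_eq_iff)

lemma sum_lists_len_delta:
  "x \<in> lists_len t \<Longrightarrow> (\<Sum>z\<in>lists_len t. (if x = z then 1 else 0) * f z) = (f x :: complex)"
  "x \<in> lists_len t \<Longrightarrow> (\<Sum>z\<in>lists_len t. f z * (if z = x then 1 else 0)) = (f x :: complex)"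
  by (simp_all add: finite_lists_len mult_if_zero if_distrib[of "\<lambda>z. z = _"] cong: if_cong)

lemma adj_mult_cyl_unitary:
  assumes "distinct qs" "lunitary (length qs) U"
  shows "adj (cyl qs U) ** cyl qs U = (mat 1 :: ('v::finite) qop)"
proof -
  have "adj (cyl qs U) ** cyl qs U = (cyl qs (lmult (length qs) (\<lambda>x y. cnj (U y x)) U) :: 'v qop)"
    by (simp add: adj_cyl cyl_mult[OF assms(1)])
  also have "\<dots> = cyl qs (\<lambda>x y. if x = y then 1 else 0)"
    by (rule cyl_cong) (use assms(2) in \<open>simp add: lmult_def lunitary_def\<close>)
  finally show ?thesis
    by (simp add: cyl_id)
qed

lemma adj_cyl_projector:
  assumes "lprojector (length qs) P"
  shows "adj (cyl qs P) = (cyl qs P :: ('v::finite) qop)"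
  unfolding adj_cyl
proof (rule cyl_cong)
  fix x y assume "x \<in> lists_len (length qs)" "y \<in> lists_len (length qs)"
  then show "cnj (P y x) = P x y"
    using assms unfolding lprojector_def by (metis complex_cnj_cnj)
qed

lemma cyl_projector_idem:
  assumes "distinct qs" "lprojector (length qs) P"
  shows "cyl qs P ** cyl qs P = (cyl qs P :: ('v::finite) qop)"
  unfolding cyl_mult[OF assms(1)]
proof (rule cyl_cong)
  fix x y assume "x \<in> lists_len (length qs)" "y \<in> lists_len (length qs)"
  then show "lmult (length qs) P P x y = P x y"
    using assms(2) unfolding lprojector_def lmult_def by blast
qed

lemma lprojector_lcompl:
  assumes "lprojector t P"
  shows "lprojector t (lcompl P)"
  unfolding lprojector_def
proof (intro conjI ballI)
  fix x y assume x: "x \<in> lists_len t" and y: "y \<in> lists_len t"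
  have herm: "P x y = cnj (P y x)" and idem: "(\<Sum>z\<in>lists_len t. P x z * P z y) = P x y"
    using assms x y unfolding lprojector_def by blast+
  show "lcompl P x y = cnj (lcompl P y x)"
    using herm by (simp add: lcompl_def)
  have "(\<Sum>z\<in>lists_len t. lcompl P x z * lcompl P z y) =
        (\<Sum>z\<in>lists_len t. (if x = z then 1 else 0) * (if z = y then 1 else 0))
      - (\<Sum>z\<in>lists_len t. (if x = z then 1 else 0) * P z y)
      - (\<Sum>z\<in>lists_len t. P x z * (if z = y then 1 else 0))
      + (\<Sum>z\<in>lists_len t. P x z * P z y)"
    by (simp add: lcompl_def algebra_simps sum.distrib sum_subtractf)
  also have "\<dots> = lcompl P x y"
    using x y by (simp add: sum_lists_len_delta idem lcompl_def)
  finally show "(\<Sum>z\<in>lists_len t. lcompl P x z * lcompl P z y) = lcompl P x y" .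
qed

lemma cyl_add_lcompl: "cyl qs P + cyl qs (lcompl P) = (mat 1 :: ('v::finite) qop)"
  by (simp add: cyl_add[symmetric] lcompl_def cyl_id)

lemma sum_adj_mult_cyl_ket0bra:
  assumes "distinct qs"
  shows "(\<Sum>i\<in>lists_len (length qs).
            adj (cyl qs (ket0bra (length qs) i)) ** cyl qs (ket0bra (length qs) i))
         = (mat 1 :: ('v::finite) qop)"
proof -
  let ?t = "length qs"
  have zero: "replicate ?t False \<in> lists_len ?t"
    by (simp add: lists_len_def)
  have "lmult ?t (\<lambda>x y. cnj (ket0bra ?t i y x)) (ket0bra ?t i) =
        (\<lambda>x y. if x = i \<and> y = i then 1 else 0)" for i
  proof (intro ext)
    fix x y
    have "lmult ?t (\<lambda>x y. cnj (ket0bra ?t i y x)) (ket0bra ?t i) x y =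
        (\<Sum>z\<in>lists_len ?t. if replicate ?t False = z then (if x = i \<and> y = i then 1 else 0) else 0)"
      unfolding lmult_def ket0bra_def by (rule sum.cong) auto
    then show "lmult ?t (\<lambda>x y. cnj (ket0bra ?t i y x)) (ket0bra ?t i) x y =
        (if x = i \<and> y = i then 1 else 0)"
      using zero finite_lists_len by simp
  qed
  then have "adj (cyl qs (ket0bra ?t i)) ** cyl qs (ket0bra ?t i) =
        (cyl qs (\<lambda>x y. if x = i \<and> y = i then 1 else 0) :: 'v qop)" for i
    by (simp add: adj_cyl cyl_mult[OF assms])
  then have "(\<Sum>i\<in>lists_len ?t. adj (cyl qs (ket0bra ?t i)) ** cyl qs (ket0bra ?t i)) =
        (cyl qs (\<lambda>x y. \<Sum>i\<in>lists_len ?t. if x = i \<and> y = i then 1 else 0) :: 'v qop)"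
    by (simp add: cyl_sum)
  also have "\<dots> = cyl qs (\<lambda>x y. if x = y then 1 else 0)"
  proof (rule cyl_cong)
    fix x y assume "x \<in> lists_len ?t"
    moreover have "(if x = i \<and> y = i then 1 else 0) = (if x = i then 1 else 0) * (if i = y then 1 else (0::complex))" for i
      by auto
    ultimately show "(\<Sum>i\<in>lists_len ?t. if x = i \<and> y = i then 1 else 0) = (if x = y then 1 else (0::complex))"
      by (simp only: sum_lists_len_delta(1))
  qed
  finally show ?thesis
    by (simp add: cyl_id)
qed

section \<open>Programs preserve partial density operators\<close>

lemma trace_conj: "trace (M ** A ** adj M) = trace (adj M ** M ** A)"
  by (metis matrix_mul_assoc trace_mul_sym)

lemma matrix_add_rdistrib: "((A :: 'a::comm_semiring_1 ^ 'n ^ 'm) + B) ** C = A ** C + B ** C"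
  by (simp add: matrix_matrix_mult_def vec_eq_iff ring_distribs sum.distrib)

lemma matrix_sum_rdistrib: "(\<Sum>i\<in>I. f i) ** (C :: 'a::comm_semiring_1 ^ 'n ^ 'm) = (\<Sum>i\<in>I. f i ** C)"
  by (cases "finite I") (simp_all add: matrix_matrix_mult_def vec_eq_iff sum_distrib_right sum.swap[of _ I])

lemma trace_sum: "trace (\<Sum>i\<in>I. f i) = (\<Sum>i\<in>I. trace (f i))"
  by (cases "finite I") (simp_all add: trace_def sum.swap[of _ I])

lemma assert_op_conj:
  assumes "lprojector (length qs) P"
  shows "assert_op qs P \<rho> = cyl qs P ** \<rho> ** adj (cyl qs P)"
  by (simp add: assert_op_def adj_cyl_projector[OF assms])

lemma psd_assert_op: "lprojector (length qs) P \<Longrightarrow> psd \<rho> \<Longrightarrow> psd (assert_op qs P \<rho>)"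
  by (simp add: assert_op_conj psd_conj)

lemma trace_assert_op_add_lcompl:
  assumes "distinct qs" "lprojector (length qs) P"
  shows "trace (assert_op qs P \<rho>) + trace (assert_op qs (lcompl P) \<rho>) = trace (\<rho> :: ('v::finite) qop)"
proof -
  have "trace (assert_op qs Q \<rho>) = trace (cyl qs Q ** \<rho>)" if "lprojector (length qs) Q" for Q
  proof -
    have "trace (assert_op qs Q \<rho>) = trace (adj (cyl qs Q) ** cyl qs Q ** \<rho>)"
      by (simp only: assert_op_conj[OF that] trace_conj)
    then show ?thesis
      by (simp add: adj_cyl_projector[OF that] cyl_projector_idem[OF assms(1) that])
  qed
  then show ?thesis
    using assms(2) lprojector_lcompl[OF assms(2)]
    by (simp add: trace_add[symmetric] matrix_add_rdistrib[symmetric] cyl_add_lcompl)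
qed

lemma Re_trace_assert_op:
  assumes "distinct qs" "lprojector (length qs) P" "psd \<rho>"
  shows "Re (trace (assert_op qs P \<rho>)) = Re (trace \<rho>) - Re (trace (assert_op qs (lcompl P) \<rho>))"
    and "Re (trace (assert_op qs P \<rho>)) \<le> Re (trace \<rho>)"
proof -
  show eq: "Re (trace (assert_op qs P \<rho>)) = Re (trace \<rho>) - Re (trace (assert_op qs (lcompl P) \<rho>))"
    using arg_cong[OF trace_assert_op_add_lcompl[OF assms(1,2), of \<rho>], of Re] by simp
  show "Re (trace (assert_op qs P \<rho>)) \<le> Re (trace \<rho>)"
    unfolding eq using psd_trace[OF psd_assert_op[OF lprojector_lcompl[OF assms(2)] assms(3)]] by simp
qed

definition psd_trace_nonincreasing :: "(('v::finite) qop \<Rightarrow> 'v qop) \<Rightarrow> bool" where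
  "psd_trace_nonincreasing f \<longleftrightarrow> (\<forall>\<sigma>. psd \<sigma> \<longrightarrow> psd (f \<sigma>) \<and> Re (trace (f \<sigma>)) \<le> Re (trace \<sigma>))"

lemma psd_trace_nonincreasing_Init:
  assumes "distinct qs"
  shows "psd_trace_nonincreasing (sem (Init qs) :: ('v::finite) qop \<Rightarrow> 'v qop)"
  unfolding psd_trace_nonincreasing_def
proof (intro allI impI conjI)
  fix \<rho> :: "'v qop" assume "psd \<rho>"
  let ?K = "\<lambda>i. cyl qs (ket0bra (length qs) i) :: 'v qop"
  show "psd (sem (Init qs) \<rho>)"
    by (simp add: psd_sum psd_conj \<open>psd \<rho>\<close>)
  have "trace (sem (Init qs) \<rho>) = trace ((\<Sum>i\<in>lists_len (length qs). adj (?K i) ** ?K i) ** \<rho>)"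
    by (simp add: trace_sum trace_conj matrix_sum_rdistrib)
  then show "Re (trace (sem (Init qs) \<rho>)) \<le> Re (trace \<rho>)"
    by (simp add: sum_adj_mult_cyl_ket0bra[OF assms])
qed

lemma psd_trace_nonincreasing_Apply:
  assumes "distinct qs" "lunitary (length qs) U"
  shows "psd_trace_nonincreasing (sem (Apply qs U) :: ('v::finite) qop \<Rightarrow> 'v qop)"
  by (simp add: psd_trace_nonincreasing_def psd_conj trace_conj adj_mult_cyl_unitary[OF assms])

lemma psd_trace_nonincreasing_Assert:
  assumes "distinct qs" "lprojector (length qs) P"
  shows "psd_trace_nonincreasing (sem (Assert qs P) :: ('v::finite) qop \<Rightarrow> 'v qop)"
  by (simp add: psd_trace_nonincreasing_def psd_assert_op Re_trace_assert_op(2) assms)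

lemma psd_trace_nonincreasing_If:
  assumes "distinct qs" "lprojector (length qs) P"
    and "psd_trace_nonincreasing (sem S1)" "psd_trace_nonincreasing (sem S0)"
  shows "psd_trace_nonincreasing (sem (If qs P S1 S0) :: ('v::finite) qop \<Rightarrow> 'v qop)"
  unfolding psd_trace_nonincreasing_def
proof (intro allI impI conjI)
  fix \<rho> :: "'v qop" assume \<rho>: "psd \<rho>"
  have psd1: "psd (assert_op qs P \<rho>)" and psd0: "psd (assert_op qs (lcompl P) \<rho>)"
    using psd_assert_op assms(2) lprojector_lcompl \<rho> by blast+
  then show "psd (sem (If qs P S1 S0) \<rho>)"
    using assms(3,4) by (simp add: psd_trace_nonincreasing_def psd_add)
  show "Re (trace (sem (If qs P S1 S0) \<rho>)) \<le> Re (trace \<rho>)"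
    using assms(3,4) psd1 psd0 Re_trace_assert_op(1)[OF assms(1,2) \<rho>]
    unfolding psd_trace_nonincreasing_def by (fastforce simp: trace_add)
qed

fun prog_pow :: "'v prog \<Rightarrow> nat \<Rightarrow> 'v prog" where
  "prog_pow T 0 = Skip"
| "prog_pow T (Suc k) = Seq (prog_pow T k) T"

definition loop_exit :: "'v list \<Rightarrow> lop \<Rightarrow> 'v prog \<Rightarrow> nat \<Rightarrow> 'v prog" where
  "loop_exit qs P S k = Seq (prog_pow (Seq (Assert qs P) S) k) (Assert qs (lcompl P))"

lemma sem_Seq: "sem (Seq S0 S1) = (sem S1 \<circ> sem S0 :: ('v::finite) qop \<Rightarrow> 'v qop)"
  by (simp add: fun_eq_iff)

lemma sem_prog_pow: "sem (prog_pow T k) = (sem T ^^ k :: ('v::finite) qop \<Rightarrow> 'v qop)"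
  by (induction k) (simp_all add: fun_eq_iff)

lemma sem_While_loop_exit:
  "sem (While qs P S) \<rho> = (\<Sum>k. sem (loop_exit qs P S k) (\<rho> :: ('v::finite) qop))"
proof -
  have "(\<lambda>\<sigma>. sem S (assert_op qs P \<sigma>)) = (sem (Seq (Assert qs P) S) :: 'v qop \<Rightarrow> 'v qop)"
    by (simp add: fun_eq_iff)
  then show ?thesis
    by (simp add: loop_exit_def sem_prog_pow)
qed

lemma wf_prog_pow: "wf_prog T \<Longrightarrow> wf_prog (prog_pow T k)"
  by (induction k) simp_all

lemma wf_loop_exit: "wf_prog (While qs P S) \<Longrightarrow> wf_prog (loop_exit qs P S k)"
  by (simp add: loop_exit_def wf_prog_pow lprojector_lcompl)

lemma loop_exit_partial_traces:
  assumes d: "distinct qs" and p: "lprojector (length qs) P"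
    and S: "psd_trace_nonincreasing (sem S)" and \<rho>: "psd (\<rho> :: ('v::finite) qop)"
  shows "psd (sem (loop_exit qs P S k) \<rho>)"
    and "(\<Sum>k<n. Re (trace (sem (loop_exit qs P S k) \<rho>))) \<le> Re (trace \<rho>)"
proof -
  define G where "G k = sem (prog_pow (Seq (Assert qs P) S) k) \<rho>" for k
  have exit: "sem (loop_exit qs P S k) \<rho> = assert_op qs (lcompl P) (G k)" for k
    by (simp add: loop_exit_def G_def)
  have G_Suc: "G (Suc k) = sem S (assert_op qs P (G k))" for k
    by (simp add: G_def)
  have psd_G: "psd (G k)" for k
    using S by (induction k) (simp_all add: G_Suc G_def[of 0] \<rho> psd_assert_op p psd_trace_nonincreasing_def)
  show "psd (sem (loop_exit qs P S k) \<rho>)"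
    unfolding exit by (rule psd_assert_op[OF lprojector_lcompl[OF p] psd_G])
  have "(\<Sum>k<n. Re (trace (sem (loop_exit qs P S k) \<rho>))) + Re (trace (G n)) \<le> Re (trace \<rho>)"
  proof (induction n)
    case 0
    then show ?case by (simp add: G_def)
  next
    case (Suc n)
    \<comment> \<open>one more pass through the body costs at least the trace leaving the loop now\<close>
    have "Re (trace (G (Suc n))) \<le> Re (trace (G n)) - Re (trace (sem (loop_exit qs P S n) \<rho>))"
      using S psd_assert_op[OF p psd_G] Re_trace_assert_op(1)[OF d p psd_G]
      unfolding G_Suc exit psd_trace_nonincreasing_def by fastforce
    then show ?case
      using Suc.IH by simp
  qed
  then show "(\<Sum>k<n. Re (trace (sem (loop_exit qs P S k) \<rho>))) \<le> Re (trace \<rho>)"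
    using psd_trace[OF psd_G, of n] by linarith
qed

lemma psd_trace_nonincreasing_While:
  assumes "distinct qs" "lprojector (length qs) P" "psd_trace_nonincreasing (sem S)"
  shows "psd_trace_nonincreasing (sem (While qs P S) :: ('v::finite) qop \<Rightarrow> 'v qop)"
  unfolding psd_trace_nonincreasing_def sem_While_loop_exit
  using psd_series_has_sum(2,3)[OF loop_exit_partial_traces[OF assms]] by blast

lemma psd_trace_nonincreasing_sem: "wf_prog S \<Longrightarrow> psd_trace_nonincreasing (sem S)"
proof (induction S)
  case Skip
  then show ?case by (simp add: psd_trace_nonincreasing_def)
next
  case (Seq S0 S1)
  then show ?case by (fastforce simp: psd_trace_nonincreasing_def)
qed (simp_all add: psd_trace_nonincreasing_Init psd_trace_nonincreasing_Apply
       psd_trace_nonincreasing_Assert psd_trace_nonincreasing_If psd_trace_nonincreasing_While)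

lemma sem_Dens: "wf_prog S \<Longrightarrow> \<rho> \<in> Dens \<Longrightarrow> sem S \<rho> \<in> Dens"
  using psd_trace_nonincreasing_sem[of S] by (force simp: Dens_def psd_trace_nonincreasing_def)

lemma sem_While_has_sum:
  assumes "wf_prog (While qs P S)" "\<rho> \<in> Dens"
  shows "((\<lambda>k. sem (loop_exit qs P S k) \<rho>) has_sum sem (While qs P S) \<rho>) UNIV"
proof -
  have loop: "distinct qs" "lprojector (length qs) P" "psd_trace_nonincreasing (sem S)" "psd \<rho>"
    using assms psd_trace_nonincreasing_sem by (auto simp: Dens_def)
  show ?thesis
    unfolding sem_While_loop_exit by (rule psd_series_has_sum(1)[OF loop_exit_partial_traces[OF loop]])
qed

section \<open>The induced Hoare system\<close>

lemma valid_Seq: "valid \<gamma> a S0 a' \<Longrightarrow> valid \<gamma> a' S1 b \<Longrightarrow> valid \<gamma> a (Seq S0 S1) b"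
  by (auto simp: valid_def)

lemma valid_prog_pow: "valid \<gamma> a T a \<Longrightarrow> valid \<gamma> a (prog_pow T k) a"
  by (induction k) (auto simp: valid_def)

context
  fixes \<alpha> :: "('v::finite) qop set \<Rightarrow> 'a::complete_lattice" and \<gamma> :: "'a \<Rightarrow> 'v qop set"
  assumes ws: "well_structured \<alpha> \<gamma>"
begin

lemma gamma_Dens: "\<gamma> a \<subseteq> Dens"
  using ws by (simp add: well_structured_def)

lemma alpha_mono: "c \<subseteq> c' \<Longrightarrow> c' \<subseteq> Dens \<Longrightarrow> \<alpha> c \<le> \<alpha> c'"
  using ws by (simp add: well_structured_def)

lemma gamma_mono: "a \<le> b \<Longrightarrow> \<gamma> a \<subseteq> \<gamma> b"
  using ws by (simp add: well_structured_def mono_def)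

lemma galois: "c \<subseteq> Dens \<Longrightarrow> c \<subseteq> \<gamma> a \<longleftrightarrow> \<alpha> c \<le> a"
  using ws by (simp add: well_structured_def)

lemma alpha_gamma: "\<alpha> (\<gamma> a) = a"
  using ws by (simp add: well_structured_def)

lemma alpha_has_sum:
  assumes "\<And>i. i \<in> I \<Longrightarrow> \<rho> i \<in> Dens" "(\<rho> has_sum \<sigma>) (I :: nat set)" "\<sigma> \<in> Dens"
  shows "\<alpha> {\<sigma>} = (SUP i\<in>I. \<alpha> {\<rho> i})"
proof -
  have join: "\<forall>(I::nat set) (\<rho>::nat \<Rightarrow> 'v qop) (x::nat \<Rightarrow> real) \<sigma>.
        (\<forall>i\<in>I. \<rho> i \<in> Dens \<and> x i > 0) \<and> ((\<lambda>i. x i *\<^sub>R \<rho> i) has_sum \<sigma>) I \<and> \<sigma> \<in> Dens \<longrightarrow>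
        \<alpha> {\<sigma>} = (SUP i\<in>I. \<alpha> {\<rho> i})"
    using ws unfolding well_structured_def by (elim conjE) assumption
  show ?thesis
    using join[rule_format, of I \<rho> "\<lambda>_. 1" \<sigma>] assms by simp
qed

lemma alpha_eq_SUP_singletons:
  assumes c: "c \<subseteq> Dens"
  shows "\<alpha> c = (SUP \<rho>\<in>c. \<alpha> {\<rho>})"
proof (rule antisym)
  have "{\<rho>} \<subseteq> \<gamma> (SUP \<rho>\<in>c. \<alpha> {\<rho>})" if "\<rho> \<in> c" for \<rho>
  proof (rule galois[THEN iffD2])
    show "{\<rho>} \<subseteq> Dens"
      using subsetD[OF c that] by simp
    show "\<alpha> {\<rho>} \<le> (SUP \<rho>\<in>c. \<alpha> {\<rho>})"
      using that by (rule SUP_upper)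
  qed
  then have "c \<subseteq> \<gamma> (SUP \<rho>\<in>c. \<alpha> {\<rho>})"
    by blast
  then show "\<alpha> c \<le> (SUP \<rho>\<in>c. \<alpha> {\<rho>})"
    using galois[OF c] by simp
  show "(SUP \<rho>\<in>c. \<alpha> {\<rho>}) \<le> \<alpha> c"
  proof (rule SUP_least)
    fix \<rho> assume "\<rho> \<in> c"
    then show "\<alpha> {\<rho>} \<le> \<alpha> c"
      using c by (intro alpha_mono) simp_all
  qed
qed

lemma alpha_UN:
  assumes "\<And>k. X k \<subseteq> Dens"
  shows "\<alpha> (\<Union>k. X k) = (SUP k. \<alpha> (X k))"
proof -
  have "\<alpha> (\<Union>k. X k) = (SUP \<rho>\<in>(\<Union>k. X k). \<alpha> {\<rho>})"
    using assms by (intro alpha_eq_SUP_singletons) blast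
  also have "\<dots> = (SUP k. \<alpha> (X k))"
    by (simp add: SUP_UNION alpha_eq_SUP_singletons[OF assms])
  finally show ?thesis .
qed

lemma alpha_image_has_sum:
  assumes sum: "\<And>\<rho>. \<rho> \<in> c \<Longrightarrow> ((\<lambda>k. F k \<rho>) has_sum G \<rho>) (I :: nat set)"
    and F: "\<And>\<rho> k. \<rho> \<in> c \<Longrightarrow> k \<in> I \<Longrightarrow> F k \<rho> \<in> Dens" and G: "G ` c \<subseteq> Dens"
  shows "\<alpha> (G ` c) = (SUP k\<in>I. \<alpha> (F k ` c))"
proof -
  have "\<alpha> (G ` c) = (SUP \<rho>\<in>c. \<alpha> {G \<rho>})"
    using alpha_eq_SUP_singletons[OF G] by (simp add: image_image)
  also have "\<dots> = (SUP \<rho>\<in>c. SUP k\<in>I. \<alpha> {F k \<rho>})"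
  proof (rule SUP_cong[OF refl])
    fix \<rho> assume "\<rho> \<in> c"
    then show "\<alpha> {G \<rho>} = (SUP k\<in>I. \<alpha> {F k \<rho>})"
      using F G sum by (intro alpha_has_sum) auto
  qed
  also have "\<dots> = (SUP k\<in>I. SUP \<rho>\<in>c. \<alpha> {F k \<rho>})"
    by (rule SUP_commute)
  also have "\<dots> = (SUP k\<in>I. \<alpha> (F k ` c))"
  proof (rule SUP_cong[OF refl])
    fix k assume "k \<in> I"
    then have "F k ` c \<subseteq> Dens"
      using F by blast
    then show "(SUP \<rho>\<in>c. \<alpha> {F k \<rho>}) = \<alpha> (F k ` c)"
      by (simp add: alpha_eq_SUP_singletons image_image)
  qed
  finally show ?thesis .
qed

lemma alpha_sem_If:
  assumes w: "wf_prog (If qs P S1 S0)" and c: "c \<subseteq> Dens"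
  shows "\<alpha> (sem (If qs P S1 S0) ` c) =
    sup (\<alpha> (sem (Seq (Assert qs P) S1) ` c)) (\<alpha> (sem (Seq (Assert qs (lcompl P)) S0) ` c))"
proof -
  define F where "F k = (if k = 0 then sem (Seq (Assert qs P) S1) else sem (Seq (Assert qs (lcompl P)) S0))"
    for k :: nat
  have w1: "wf_prog (Seq (Assert qs P) S1)" and w0: "wf_prog (Seq (Assert qs (lcompl P)) S0)"
    using w lprojector_lcompl by auto
  have "((\<lambda>k. F k \<rho>) has_sum sem (If qs P S1 S0) \<rho>) {0, 1}" for \<rho>
    using has_sum_finite[of "{0::nat, 1}" "\<lambda>k. F k \<rho>"] by (simp add: F_def)
  moreover have "F k \<rho> \<in> Dens" "sem (If qs P S1 S0) \<rho> \<in> Dens" if "\<rho> \<in> c" for k \<rho>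
    using sem_Dens[OF w1] sem_Dens[OF w0] sem_Dens[OF w] that c
    by (auto simp: F_def simp del: sem.simps)
  ultimately have "\<alpha> (sem (If qs P S1 S0) ` c) = (SUP k\<in>{0, 1}. \<alpha> (F k ` c))"
    by (intro alpha_image_has_sum) auto
  then show ?thesis
    by (simp add: F_def)
qed

lemma alpha_sem_While:
  assumes w: "wf_prog (While qs P S)" and c: "c \<subseteq> Dens"
  shows "\<alpha> (sem (While qs P S) ` c) = (SUP k. \<alpha> (sem (loop_exit qs P S k) ` c))"
proof (rule alpha_image_has_sum)
  show "((\<lambda>k. sem (loop_exit qs P S k) \<rho>) has_sum sem (While qs P S) \<rho>) UNIV" if "\<rho> \<in> c" for \<rho>
    using sem_While_has_sum[OF w] that c by blast
  show "sem (loop_exit qs P S k) \<rho> \<in> Dens" if "\<rho> \<in> c" for \<rho> k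
    using sem_Dens[OF wf_loop_exit[OF w]] that c by blast
  show "sem (While qs P S) ` c \<subseteq> Dens"
    using sem_Dens[OF w] c by blast
qed

lemma valid_iff_alpha:
  assumes "wf_prog S"
  shows "valid \<gamma> a S b \<longleftrightarrow> \<alpha> (sem S ` \<gamma> a) \<le> b"
proof -
  have "sem S ` \<gamma> a \<subseteq> Dens"
    using sem_Dens[OF assms] gamma_Dens by blast
  then show ?thesis
    unfolding valid_def by (rule galois)
qed

theorem hoare_sound:
  assumes sound: "\<forall>e. basic e \<and> wf_prog e \<longrightarrow> sound_abs \<alpha> (sem e) (absop e)"
  shows "hoare absop a S b \<Longrightarrow> wf_prog S \<Longrightarrow> valid \<gamma> a S b"
proof (induction rule: hoare.induct)
  case (Exp e a)
  then have "\<alpha> (sem e ` \<gamma> a) \<le> absop e (\<alpha> (\<gamma> a))"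
    using sound gamma_Dens unfolding sound_abs_def by blast
  then show ?case
    using Exp.prems by (simp add: valid_iff_alpha alpha_gamma)
next
  case (SeqR a S0 a' S1 b)
  then show ?case
    by (auto intro: valid_Seq)
next
  case (Imp a a' S b' b)
  then show ?case
    using gamma_mono[of a a'] gamma_mono[of b' b] by (auto simp: valid_def)
next
  case (Meas a qs P S1 b1 S0 b0)
  have "wf_prog (Seq (Assert qs P) S1)" "wf_prog (Seq (Assert qs (lcompl P)) S0)"
    using Meas.prems lprojector_lcompl by auto
  then have "\<alpha> (sem (Seq (Assert qs P) S1) ` \<gamma> a) \<le> b1"
    and "\<alpha> (sem (Seq (Assert qs (lcompl P)) S0) ` \<gamma> a) \<le> b0"
    using Meas.IH valid_iff_alpha by blast+
  then show ?case
    unfolding valid_iff_alpha[OF Meas.prems] alpha_sem_If[OF Meas.prems gamma_Dens]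
    by (simp add: le_supI1 le_supI2)
next
  case (WhileR a qs P S b)
  have "wf_prog (Seq (Assert qs P) S)" "wf_prog (Assert qs (lcompl P))"
    using WhileR.prems lprojector_lcompl by auto
  then have body: "valid \<gamma> a (Seq (Assert qs P) S) a" and exit: "valid \<gamma> a (Assert qs (lcompl P)) b"
    using WhileR.IH by blast+
  have "valid \<gamma> a (loop_exit qs P S k) b" for k
    unfolding loop_exit_def by (rule valid_Seq[OF valid_prog_pow[OF body] exit])
  then have "\<alpha> (sem (loop_exit qs P S k) ` \<gamma> a) \<le> b" for k
    using valid_iff_alpha wf_loop_exit[OF WhileR.prems] by blast
  then show ?case
    unfolding valid_iff_alpha[OF WhileR.prems] alpha_sem_While[OF WhileR.prems gamma_Dens]
    by (rule SUP_least)
qed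

definition strongest_post :: "('v qop \<Rightarrow> 'v qop) \<Rightarrow> 'a \<Rightarrow> 'a" where
  "strongest_post f a = \<alpha> (f ` \<gamma> a)"

lemma complete_abs_unique: "complete_abs \<alpha> f F \<Longrightarrow> F = strongest_post f"
  using gamma_Dens by (auto simp: complete_abs_def strongest_post_def alpha_gamma fun_eq_iff)

lemma complete_abs_strongest_post: "complete_abs \<alpha> f F \<Longrightarrow> complete_abs \<alpha> f (strongest_post f)"
  using complete_abs_unique by simp

lemma complete_abs_Seq:
  assumes "complete_abs \<alpha> (sem S0) F0" "complete_abs \<alpha> (sem S1) F1" "wf_prog S0"
  shows "complete_abs \<alpha> (sem (Seq S0 S1)) (F1 \<circ> F0)"
  unfolding complete_abs_def
proof (intro allI impI)
  fix c :: "'v qop set" assume c: "c \<subseteq> Dens"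
  have "sem S0 ` c \<subseteq> Dens"
    using sem_Dens[OF assms(3)] c by blast
  then show "\<alpha> (sem (Seq S0 S1) ` c) = (F1 \<circ> F0) (\<alpha> c)"
    using assms(1,2) c unfolding complete_abs_def by (simp add: image_image[symmetric])
qed

lemma complete_abs_If:
  assumes "complete_abs \<alpha> (sem (Seq (Assert qs P) S1)) F1"
    and "complete_abs \<alpha> (sem (Seq (Assert qs (lcompl P)) S0)) F0" and "wf_prog (If qs P S1 S0)"
  shows "complete_abs \<alpha> (sem (If qs P S1 S0)) (\<lambda>a. sup (F1 a) (F0 a))"
  unfolding complete_abs_def
proof (intro allI impI)
  fix c :: "'v qop set" assume "c \<subseteq> Dens"
  then show "\<alpha> (sem (If qs P S1 S0) ` c) = sup (F1 (\<alpha> c)) (F0 (\<alpha> c))"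
    using assms unfolding complete_abs_def by (simp only: alpha_sem_If)
qed

lemma complete_abs_While:
  assumes "\<And>k. complete_abs \<alpha> (sem (loop_exit qs P S k)) (F k)" and "wf_prog (While qs P S)"
  shows "complete_abs \<alpha> (sem (While qs P S)) (\<lambda>a. SUP k. F k a)"
  unfolding complete_abs_def
proof (intro allI impI)
  fix c :: "'v qop set" assume "c \<subseteq> Dens"
  then show "\<alpha> (sem (While qs P S) ` c) = (SUP k. F k (\<alpha> c))"
    using assms unfolding complete_abs_def by (simp only: alpha_sem_While)
qed

context
  fixes absop :: "'v prog \<Rightarrow> 'a \<Rightarrow> 'a"
  assumes complete: "\<forall>e. basic e \<and> wf_prog e \<longrightarrow> complete_abs \<alpha> (sem e) (absop e)"
begin

lemma complete_abs_basic:
  "basic e \<Longrightarrow> wf_prog e \<Longrightarrow> complete_abs \<alpha> (sem e) (strongest_post (sem e))"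
  using complete complete_abs_strongest_post by blast

lemma complete_abs_sem: "wf_prog S \<Longrightarrow> complete_abs \<alpha> (sem S) (strongest_post (sem S))"
proof (induction S)
  case (Seq S0 S1)
  then show ?case
    by (intro complete_abs_strongest_post[OF complete_abs_Seq]) simp_all
next
  case (If qs P S1 S0)
  have "complete_abs \<alpha> (sem (Assert qs P)) (strongest_post (sem (Assert qs P)))"
    and "complete_abs \<alpha> (sem (Assert qs (lcompl P))) (strongest_post (sem (Assert qs (lcompl P))))"
    using If.prems lprojector_lcompl by (intro complete_abs_basic; simp)+
  then have "complete_abs \<alpha> (sem (Seq (Assert qs P) S1))
      (strongest_post (sem S1) \<circ> strongest_post (sem (Assert qs P)))"
    and "complete_abs \<alpha> (sem (Seq (Assert qs (lcompl P)) S0))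
      (strongest_post (sem S0) \<circ> strongest_post (sem (Assert qs (lcompl P))))"
    using If lprojector_lcompl by (intro complete_abs_Seq; simp)+
  then show ?case
    by (rule complete_abs_strongest_post[OF complete_abs_If[OF _ _ If.prems]])
next
  case (While qs P S)
  have "complete_abs \<alpha> (sem (Assert qs P)) (strongest_post (sem (Assert qs P)))"
    using While.prems by (intro complete_abs_basic) simp_all
  then have body: "complete_abs \<alpha> (sem (Seq (Assert qs P) S))
      (strongest_post (sem S) \<circ> strongest_post (sem (Assert qs P)))"
    using While by (intro complete_abs_Seq) simp_all
  have exit: "complete_abs \<alpha> (sem (Assert qs (lcompl P))) (strongest_post (sem (Assert qs (lcompl P))))"
    using While.prems lprojector_lcompl by (intro complete_abs_basic) simp_all
  have pow: "complete_abs \<alpha> (sem (prog_pow (Seq (Assert qs P) S) k))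
      (strongest_post (sem (prog_pow (Seq (Assert qs P) S) k)))" for k
  proof (induction k)
    case 0
    then show ?case
      using complete_abs_basic[of Skip] by (simp del: sem.simps)
  next
    case (Suc k)
    have "wf_prog (prog_pow (Seq (Assert qs P) S) k)"
      using While.prems by (intro wf_prog_pow) simp
    then show ?case
      unfolding prog_pow.simps by (rule complete_abs_strongest_post[OF complete_abs_Seq[OF Suc body]])
  qed
  have "complete_abs \<alpha> (sem (loop_exit qs P S k)) (strongest_post (sem (loop_exit qs P S k)))" for k
  proof -
    have "wf_prog (prog_pow (Seq (Assert qs P) S) k)"
      using While.prems by (intro wf_prog_pow) simp
    then show ?thesis
      unfolding loop_exit_def by (rule complete_abs_strongest_post[OF complete_abs_Seq[OF pow exit]])
  qed
  then show ?case
    by (rule complete_abs_strongest_post[OF complete_abs_While[OF _ While.prems]])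
qed (use complete_abs_basic in simp_all)

lemma hoare_basic_strongest_post:
  assumes "basic e" "wf_prog e"
  shows "hoare absop a e (strongest_post (sem e) a)"
proof -
  have "absop e = strongest_post (sem e)"
    using complete assms by (intro complete_abs_unique) blast
  then show ?thesis
    using hoare.Exp[OF assms(1), of absop a] by simp
qed

lemma hoare_Seq_strongest_post:
  assumes "\<And>a. hoare absop a S0 (strongest_post (sem S0) a)"
    and "\<And>a. hoare absop a S1 (strongest_post (sem S1) a)" and "wf_prog (Seq S0 S1)"
  shows "hoare absop a (Seq S0 S1) (strongest_post (sem (Seq S0 S1)) a)"
proof -
  have "complete_abs \<alpha> (sem (Seq S0 S1)) (strongest_post (sem S1) \<circ> strongest_post (sem S0))"
    using assms(3) by (intro complete_abs_Seq complete_abs_sem) simp_all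
  then have "strongest_post (sem S1) (strongest_post (sem S0) a) = strongest_post (sem (Seq S0 S1)) a"
    using complete_abs_unique by (metis comp_apply)
  then show ?thesis
    using hoare.SeqR[OF assms(1) assms(2), of a] by metis
qed

lemma hoare_While_strongest_post:
  assumes body: "\<And>a. hoare absop a (Seq (Assert qs P) S) (strongest_post (sem (Seq (Assert qs P) S)) a)"
    and w: "wf_prog (While qs P S)"
  shows "hoare absop a (While qs P S) (strongest_post (sem (While qs P S)) a)"
proof -
  let ?B = "Seq (Assert qs P) S" and ?E = "Assert qs (lcompl P)"
  define U where "U = (\<Union>k. sem (prog_pow ?B k) ` \<gamma> a)"
  have wB: "wf_prog ?B" and wE: "wf_prog ?E"
    using w lprojector_lcompl by auto
  have U: "U \<subseteq> Dens"
    unfolding U_def using sem_Dens[OF wf_prog_pow[OF wB]] gamma_Dens by blast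
  have post_U: "strongest_post (sem T) (\<alpha> U) = \<alpha> (sem T ` U)" if "wf_prog T" for T
    using complete_abs_sem[OF that] U unfolding complete_abs_def by simp
  have "\<gamma> a \<subseteq> U"
    unfolding U_def using UN_upper[of 0 UNIV "\<lambda>k. sem (prog_pow ?B k) ` \<gamma> a"] by simp
  then have pre: "a \<le> \<alpha> U"
    using alpha_mono[OF _ U] alpha_gamma by metis
  have "sem ?B ` U \<subseteq> U"
  proof
    fix x assume "x \<in> sem ?B ` U"
    then obtain k \<rho> where "\<rho> \<in> \<gamma> a" "x = sem ?B (sem (prog_pow ?B k) \<rho>)"
      unfolding U_def by blast
    moreover have "sem ?B (sem (prog_pow ?B k) \<rho>) = sem (prog_pow ?B (Suc k)) \<rho>"
      by simp
    ultimately show "x \<in> U"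
      unfolding U_def by blast
  qed
  then have "strongest_post (sem ?B) (\<alpha> U) \<le> \<alpha> U"
    unfolding post_U[OF wB] by (rule alpha_mono[OF _ U])
  then have inv: "hoare absop (\<alpha> U) ?B (\<alpha> U)"
    by (rule hoare.Imp[OF order.refl body])
  have "strongest_post (sem ?E) (\<alpha> U) = \<alpha> (sem ?E ` U)"
    by (rule post_U[OF wE])
  also have "sem ?E ` U = (\<Union>k. sem (loop_exit qs P S k) ` \<gamma> a)"
    by (simp only: U_def image_UN image_comp loop_exit_def sem_Seq)
  also have "\<alpha> \<dots> = (SUP k. \<alpha> (sem (loop_exit qs P S k) ` \<gamma> a))"
    using sem_Dens[OF wf_loop_exit[OF w]] gamma_Dens by (intro alpha_UN) blast
  also have "\<dots> = strongest_post (sem (While qs P S)) a"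
    by (simp only: strongest_post_def alpha_sem_While[OF w gamma_Dens])
  finally have "strongest_post (sem ?E) (\<alpha> U) = strongest_post (sem (While qs P S)) a" .
  then have "hoare absop (\<alpha> U) ?E (strongest_post (sem (While qs P S)) a)"
    using hoare_basic_strongest_post[of ?E "\<alpha> U"] wE by (simp del: sem.simps)
  then show ?thesis
    by (rule hoare.Imp[OF pre hoare.WhileR[OF inv] order.refl])
qed

lemma hoare_strongest_post: "wf_prog S \<Longrightarrow> hoare absop a S (strongest_post (sem S) a)"
proof (induction S arbitrary: a)
  case (Seq S0 S1)
  then show ?case
    by (intro hoare_Seq_strongest_post) simp_all
next
  case (If qs P S1 S0)
  have "hoare absop a (Seq (Assert qs P) S1) (strongest_post (sem (Seq (Assert qs P) S1)) a)"
    and "hoare absop a (Seq (Assert qs (lcompl P)) S0)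
      (strongest_post (sem (Seq (Assert qs (lcompl P)) S0)) a)"
    using If lprojector_lcompl by (intro hoare_Seq_strongest_post; simp add: hoare_basic_strongest_post)+
  then show ?case
    using hoare.Meas
    by (simp add: strongest_post_def alpha_sem_If[OF If.prems gamma_Dens] sup_commute del: sem.simps)
next
  case (While qs P S)
  then show ?case
    by (intro hoare_While_strongest_post hoare_Seq_strongest_post; simp add: hoare_basic_strongest_post)
qed (simp_all add: hoare_basic_strongest_post)

theorem hoare_complete: "wf_prog S \<Longrightarrow> valid \<gamma> a S b \<Longrightarrow> hoare absop a S b"
  using hoare.Imp[OF order.refl hoare_strongest_post]
  by (simp add: valid_iff_alpha strongest_post_def)

end

end

lemma complete_abs_imp_sound_abs: "complete_abs \<alpha> f F \<Longrightarrow> sound_abs \<alpha> f F"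
  by (simp add: complete_abs_def sound_abs_def)

theorem mainTheorem9:
  fixes \<alpha> :: "('v::finite) qop set \<Rightarrow> 'a::complete_lattice"
    and \<gamma> :: "'a \<Rightarrow> 'v qop set"
    and absop :: "'v prog \<Rightarrow> 'a \<Rightarrow> 'a"
  assumes ws: "well_structured \<alpha> \<gamma>"
    and mono_abs: "\<forall>e. basic e \<and> wf_prog e \<longrightarrow> mono (absop e)"
  shows "((\<forall>e. basic e \<and> wf_prog e \<longrightarrow> sound_abs \<alpha> (sem e) (absop e)) \<longrightarrow>
            (\<forall>S a b. wf_prog S \<longrightarrow> hoare absop a S b \<longrightarrow> valid \<gamma> a S b))
       \<and> ((\<forall>e. basic e \<and> wf_prog e \<longrightarrow> complete_abs \<alpha> (sem e) (absop e)) \<longrightarrow>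
            (\<forall>S a b. wf_prog S \<longrightarrow> (hoare absop a S b \<longleftrightarrow> valid \<gamma> a S b)))"
proof (intro conjI impI allI)
  fix S :: "'v prog" and a b :: 'a
  assume "\<forall>e. basic e \<and> wf_prog e \<longrightarrow> sound_abs \<alpha> (sem e) (absop e)"
    and "wf_prog S" and "hoare absop a S b"
  then show "valid \<gamma> a S b"
    using hoare_sound[OF ws] by blast
next
  fix S :: "'v prog" and a b :: 'a
  assume complete: "\<forall>e. basic e \<and> wf_prog e \<longrightarrow> complete_abs \<alpha> (sem e) (absop e)" and "wf_prog S"
  then show "hoare absop a S b \<longleftrightarrow> valid \<gamma> a S b"
    using hoare_sound[OF ws] hoare_complete[OF ws complete] complete_abs_imp_sound_abs by blast
qed

end
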